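(* Let $(a,b,c)\in\mathcal{I}:=\{(a,b,c)\in[0,1]^3 : a\le b,\ c\le b\}$. Then $(a',b',c'):=\varphi(a,b,c)\in\mathcal{I}$ and $\psi(\mathcal{S}_{a,b,c})\subset\mathcal{S}_{a',b',c'}$, where $$\varphi(a,b,c):=\left(\Big(\frac{1+b}{1+2b}\Big)^d,\ \Big(\frac{1+a+ac}{1+2a}\Big)^d,\ b^d\Big(\frac{1+c+c^2}{1+b+bc}\Big)^d\right).$$
   Context: Fix an integer $d\ge2$. For a probability distribution $z=(z_i)_{i\in\mathbb{Z}}$ on $\mathbb{Z}$ set $A(z)_i=(z_{i-1}+z_i+z_{i+1})^d$ and $F(z)=A(z)/\sum_{i\in\mathbb{Z}}A(z)_i$. Let $\mathcal{E}$ be the set of probability distributions $z$ on $\mathbb{Z}$ that are symmetric ($z_i=z_{-i}$) and whose support is an interval of $\mathbb{Z}$ or all of $\mathbb{Z}$. Define $\mathsf R\colon\mathcal{E}\to[0,\infty)^{\{1,2,\dots\}}$ by $\mathsf R(z)_i=z_i/z_{i-1}$ if $z_{i-1}\neq0$ and $\mathsf R(z)_i=0$ otherwise ($i\ge1$); $\mathsf R$ is injective on $\mathcal{E}$, and $\mathcal{R}:=\mathsf R(\mathcal{E})$. $F$ maps $\mathcal{E}$ to $\mathcal{E}$, and $\psi:=\mathsf R\circ F\circ\mathsf R^{-1}\colon\mathcal{R}\to\mathcal{R}$. Explicitly, writing $\psi_n(x)=\psi(x)_n$: $\psi_1(x)=\big(\frac{1+x_1+x_1x_2}{1+2x_1}\big)^d$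 and $\psi_n(x)=x_{n-1}^d\big(\frac{1+x_n+x_nx_{n+1}}{1+x_{n-1}+x_{n-1}x_n}\big)^d$ for $n\ge2$. For reals $a,b,c$, $\mathcal{S}_{a,b,c}:=\{x\in\mathcal{R}: a\le x_1\le b,\ 0\le x_n\le c\text{ for all }n\ge2\}$. *)

theory Defs
  imports "HOL-Analysis.Analysis"
begin

definition symdist :: "(int \<Rightarrow> real) set" where
  "symdist = {z. (\<forall>i. 0 \<le> z i) \<and> (z has_sum 1) UNIV \<and> (\<forall>i. z (-i) = z i) \<and>
     (\<forall>i j k. i \<le> j \<and> j \<le> k \<and> z i \<noteq> 0 \<and> z k \<noteq> 0 \<longrightarrow> z j \<noteq> 0)}"

text \<open>The ratio map R; sequences indexed by 1,2,...; the unused index 0 is set to 0.\<close>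
definition Rmap :: "(int \<Rightarrow> real) \<Rightarrow> (nat \<Rightarrow> real)" where
  "Rmap z = (\<lambda>n. if n = 0 then 0
                  else if z (int n - 1) \<noteq> 0 then z (int n) / z (int n - 1) else 0)"

definition Amap :: "nat \<Rightarrow> (int \<Rightarrow> real) \<Rightarrow> (int \<Rightarrow> real)" where
  "Amap d z = (\<lambda>i. (z (i - 1) + z i + z (i + 1)) ^ d)"

definition Fmap :: "nat \<Rightarrow> (int \<Rightarrow> real) \<Rightarrow> (int \<Rightarrow> real)" where
  "Fmap d z = (\<lambda>i. Amap d z i / infsum (Amap d z) UNIV)"

definition Rset :: "(nat \<Rightarrow> real) set" where
  "Rset = Rmap ` symdist"

definition psi :: "nat \<Rightarrow> (nat \<Rightarrow> real) \<Rightarrow> (nat \<Rightarrow> real)" where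
  "psi d x = Rmap (Fmap d (inv_into symdist Rmap x))"

definition Sset :: "real \<Rightarrow> real \<Rightarrow> real \<Rightarrow> (nat \<Rightarrow> real) set" where
  "Sset a b c = {x \<in> Rset. a \<le> x 1 \<and> x 1 \<le> b \<and> (\<forall>n\<ge>2. 0 \<le> x n \<and> x n \<le> c)}"

definition Iset :: "(real \<times> real \<times> real) set" where
  "Iset = {(a, b, c). 0 \<le> a \<and> a \<le> 1 \<and> 0 \<le> b \<and> b \<le> 1 \<and> 0 \<le> c \<and> c \<le> 1 \<and> a \<le> b \<and> c \<le> b}"

definition phi :: "nat \<Rightarrow> real \<Rightarrow> real \<Rightarrow> real \<Rightarrow> real \<times> real \<times> real" where
  "phi d a b c = (((1 + b) / (1 + 2 * b)) ^ d,
                  ((1 + a + a * c) / (1 + 2 * a)) ^ d,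
                  b ^ d * ((1 + c + c ^ 2) / (1 + b + b * c)) ^ d)"

end

theory Submission
  imports Defs
begin

(* Writing z (i + 1) = z i * x (i + 1) with x = R z, the normalisation of F cancels in the
   ratios and psi becomes explicit: psi x 1 = head_ratio (x 1) (x 2) ^ d and
   psi x n = tail_ratio (x (n - 1)) (x n) (x (n + 1)) ^ d for n \<ge> 2.  Now head_ratio
   decreases in its first argument and increases in its second, while tail_ratio increases
   in all three, so the box constraints of S(a,b,c) propagate to the bounds head_ratio b 0 ^ d,
   head_ratio a c ^ d and tail_ratio b c c ^ d, which are exactly the components of phi.
   That phi preserves I follows from the same monotonicity together with
   tail_ratio b c c \<le> head_ratio b c. *)

definition convex_support :: "(int \<Rightarrow> real) \<Rightarrow> bool" where
  "convex_support z \<longleftrightarrow> (\<forall>i j k. i \<le> j \<longrightarrow> j \<le> k \<longrightarrow> z i \<noteq> 0 \<longrightarrow> z k \<noteq> 0 \<longrightarrow> z j \<noteq> 0)"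

lemma symdist_iff:
  "z \<in> symdist \<longleftrightarrow>
     (\<forall>i. 0 \<le> z i) \<and> (z has_sum 1) UNIV \<and> (\<forall>i. z (-i) = z i) \<and> convex_support z"
  unfolding symdist_def convex_support_def by blast

lemma symdist_nonneg: "z \<in> symdist \<Longrightarrow> 0 \<le> z i"
  and symdist_has_sum: "z \<in> symdist \<Longrightarrow> (z has_sum 1) UNIV"
  and symdist_symmetric: "z \<in> symdist \<Longrightarrow> z (-i) = z i"
  and symdist_convex_support: "z \<in> symdist \<Longrightarrow> convex_support z"
  by (simp_all add: symdist_iff)

lemma convex_supportD:
  "convex_support z \<Longrightarrow> i \<le> j \<Longrightarrow> j \<le> k \<Longrightarrow> z i \<noteq> 0 \<Longrightarrow> z k \<noteq> 0 \<Longrightarrow> z j \<noteq> 0"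
  unfolding convex_support_def by blast

lemma symdist_summable: "z \<in> symdist \<Longrightarrow> z summable_on UNIV"
  using symdist_has_sum summable_on_def by blast

lemma symdist_le_one:
  assumes "z \<in> symdist"
  shows "z i \<le> 1"
proof -
  have "infsum z {i} \<le> infsum z UNIV"
    by (rule infsum_mono_neutral) (auto simp: assms symdist_summable symdist_nonneg)
  then show ?thesis
    using infsumI[OF symdist_has_sum[OF assms]] by simp
qed

lemma symdist_center_pos:
  assumes "z \<in> symdist"
  shows "z 0 > 0"
proof -
  obtain i where "z i \<noteq> 0"
    using has_sum_0[of UNIV z] has_sum_unique[OF symdist_has_sum[OF assms]] by force
  moreover have "z (-i) = z i"
    using assms by (rule symdist_symmetric)
  ultimately have "z 0 \<noteq> 0"
    using convex_supportD[OF symdist_convex_support[OF assms], of "- \<bar>i\<bar>" 0 "\<bar>i\<bar>"]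
    by (cases "0 \<le> i") auto
  then show ?thesis
    using symdist_nonneg[OF assms, of 0] by simp
qed

lemma symdist_vanishes_beyond:
  assumes "z \<in> symdist" "z (int m) = 0"
  shows "z (int m + 1) = 0"
proof (rule ccontr)
  assume nz: "z (int m + 1) \<noteq> 0"
  then have "z (- (int m + 1)) \<noteq> 0"
    using symdist_symmetric[OF assms(1)] by metis
  then have "z (int m) \<noteq> 0"
    using nz by (rule convex_supportD[OF symdist_convex_support[OF assms(1)], rotated 2]) auto
  then show False
    using assms(2) by simp
qed

lemma Rmap_Suc:
  "Rmap z (Suc n) = (if z (int n) \<noteq> 0 then z (int n + 1) / z (int n) else 0)"
  unfolding Rmap_def by (simp add: add.commute)

lemma Rmap_nonneg: "z \<in> symdist \<Longrightarrow> 0 \<le> Rmap z n"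
  unfolding Rmap_def by (simp add: symdist_nonneg)

lemma symdist_Suc_eq_mult_Rmap:
  assumes "z \<in> symdist"
  shows "z (int m + 1) = z (int m) * Rmap z (Suc m)"
  using symdist_vanishes_beyond[OF assms, of m] by (simp add: Rmap_Suc)

lemma Rmap_divide_const: "c \<noteq> 0 \<Longrightarrow> Rmap (\<lambda>i. z i / c) = Rmap z"
  unfolding Rmap_def by auto

lemma Rmap_power: "d \<ge> 1 \<Longrightarrow> Rmap (\<lambda>i. z i ^ d) n = Rmap z n ^ d"
  unfolding Rmap_def by (simp add: power_divide)

definition window_sum :: "(int \<Rightarrow> real) \<Rightarrow> int \<Rightarrow> real" where
  "window_sum z i = z (i - 1) + z i + z (i + 1)"

lemma Amap_eq_window_sum_power: "Amap d z = (\<lambda>i. window_sum z i ^ d)"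
  unfolding Amap_def window_sum_def ..

lemma window_sum_nonneg: "(\<And>i. 0 \<le> z i) \<Longrightarrow> 0 \<le> window_sum z i"
  unfolding window_sum_def by (simp add: add_nonneg_nonneg)

lemma window_sum_neq_zeroI:
  assumes "\<And>i. 0 \<le> z i" "z i \<noteq> 0" "\<bar>i - j\<bar> \<le> 1"
  shows "window_sum z j \<noteq> 0"
proof -
  have "i = j - 1 \<or> i = j \<or> i = j + 1"
    using assms(3) by linarith
  then show ?thesis
    unfolding window_sum_def using assms(1)[of "j - 1"] assms(1)[of j] assms(1)[of "j + 1"] assms(2)
    by auto
qed

lemma window_sum_neq_zeroD:
  assumes "window_sum z j \<noteq> 0"
  obtains i where "\<bar>i - j\<bar> \<le> 1" "z i \<noteq> 0"
  using assms that[of "j - 1"] that[of j] that[of "j + 1"] unfolding window_sum_def by force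

lemma convex_support_window_sum:
  assumes nonneg: "\<And>i. 0 \<le> z i" and conv: "convex_support z"
  shows "convex_support (window_sum z)"
  unfolding convex_support_def
proof (intro allI impI)
  fix i j k
  assume "i \<le> j" "j \<le> k" "window_sum z i \<noteq> 0" "window_sum z k \<noteq> 0"
  then obtain i' k' where i': "\<bar>i' - i\<bar> \<le> 1" "z i' \<noteq> 0" and k': "\<bar>k' - k\<bar> \<le> 1" "z k' \<noteq> 0"
    by (metis window_sum_neq_zeroD)
  consider "j < i'" | "k' < j" | "i' \<le> j" "j \<le> k'"
    by linarith
  then show "window_sum z j \<noteq> 0"
  proof cases
    case 1
    then show ?thesis
      using \<open>i \<le> j\<close> i' by (intro window_sum_neq_zeroI[of z, OF nonneg i'(2)]) auto
  next
    case 2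
    then show ?thesis
      using \<open>j \<le> k\<close> k' by (intro window_sum_neq_zeroI[of z, OF nonneg k'(2)]) auto
  next
    case 3
    then have "z j \<noteq> 0"
      using i'(2) k'(2) by (rule convex_supportD[OF conv])
    then show ?thesis
      by (intro window_sum_neq_zeroI[of z, OF nonneg]) auto
  qed
qed

lemma window_sum_symmetric:
  assumes "\<And>i. z (-i) = z i"
  shows "window_sum z (-i) = window_sum z i"
proof -
  have "-i - 1 = -(i + 1)" "-i + 1 = -(i - 1)"
    by simp_all
  then show ?thesis
    unfolding window_sum_def by (simp only: assms)
qed

lemma summable_on_shift:
  fixes z :: "int \<Rightarrow> 'a :: {comm_monoid_add, topological_space}"
  assumes "z summable_on UNIV"
  shows "(\<lambda>i. z (i + k)) summable_on UNIV"
proof -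
  have bij: "bij_betw (\<lambda>i. i + k) UNIV UNIV"
    by (rule bij_betwI[where g = "\<lambda>i. i - k"]) auto
  show ?thesis
    using summable_on_reindex_bij_betw[OF bij, of z] assms by simp
qed

lemma window_sum_summable:
  "z summable_on UNIV \<Longrightarrow> window_sum z summable_on UNIV"
  unfolding window_sum_def
  using summable_on_shift[of z "-1"] summable_on_shift[of z 1]
  by (intro summable_on_add) simp_all

lemma Amap_nonneg: "z \<in> symdist \<Longrightarrow> 0 \<le> Amap d z i"
  unfolding Amap_eq_window_sum_power by (simp add: window_sum_nonneg symdist_nonneg)

lemma Amap_summable:
  assumes "z \<in> symdist" "d \<ge> 1"
  shows "Amap d z summable_on UNIV"
proof -
  let ?s = "window_sum z"
  have s_nonneg: "0 \<le> ?s i" for i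
    by (intro window_sum_nonneg symdist_nonneg assms(1))
  have "?s i \<le> 3" for i
    unfolding window_sum_def using symdist_le_one[OF assms(1), of "i - 1"]
      symdist_le_one[OF assms(1), of i] symdist_le_one[OF assms(1), of "i + 1"] by simp
  then have "?s i ^ d \<le> 3 ^ (d - 1) * ?s i" for i
  proof -
    have "?s i ^ d = ?s i ^ (d - 1) * ?s i"
      using assms(2) by (metis Suc_diff_1 less_le_trans power_Suc2 zero_less_one)
    also have "\<dots> \<le> 3 ^ (d - 1) * ?s i"
      by (intro mult_right_mono power_mono s_nonneg \<open>?s i \<le> 3\<close>)
    finally show ?thesis .
  qed
  moreover have "(\<lambda>i. 3 ^ (d - 1) * ?s i) summable_on UNIV"
    by (intro summable_on_cmult_right window_sum_summable symdist_summable assms(1))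
  ultimately show ?thesis
    unfolding Amap_eq_window_sum_power
    using summable_on_comparison_test[of "\<lambda>i. 3 ^ (d - 1) * ?s i" UNIV "\<lambda>i. ?s i ^ d"]
    by (simp add: s_nonneg)
qed

lemma Amap_infsum_pos:
  assumes "z \<in> symdist" "d \<ge> 1"
  shows "infsum (Amap d z) UNIV > 0"
proof -
  have "window_sum z 0 \<ge> z 0"
    unfolding window_sum_def using symdist_nonneg[OF assms(1), of "-1"] symdist_nonneg[OF assms(1), of 1]
    by simp
  then have "Amap d z 0 > 0"
    using symdist_center_pos[OF assms(1)] by (simp add: Amap_eq_window_sum_power)
  moreover have "infsum (Amap d z) {0} \<le> infsum (Amap d z) UNIV"
    using Amap_summable[OF assms] by (intro infsum_mono_neutral) (auto intro: Amap_nonneg assms)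
  ultimately show ?thesis by simp
qed

lemma Fmap_symdist:
  assumes "z \<in> symdist" "d \<ge> 1"
  shows "Fmap d z \<in> symdist"
  unfolding symdist_iff
proof (intro conjI allI)
  define S where "S = infsum (Amap d z) UNIV"
  have S_pos: "S > 0"
    unfolding S_def using assms by (rule Amap_infsum_pos)
  have F: "Fmap d z = (\<lambda>i. window_sum z i ^ d / S)"
    unfolding Fmap_def S_def Amap_eq_window_sum_power ..
  have "(Amap d z has_sum S) UNIV"
    unfolding S_def using Amap_summable[OF assms] by (rule has_sum_infsum)
  then show "(Fmap d z has_sum 1) UNIV"
    using has_sum_divide_const[of "Amap d z" UNIV S S] S_pos
    by (simp add: F Amap_eq_window_sum_power)
  have nonneg: "\<And>i. 0 \<le> z i" and sym: "\<And>i. z (-i) = z i"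
    using assms(1) by (simp_all add: symdist_nonneg symdist_symmetric)
  show "0 \<le> Fmap d z i" for i
    unfolding F using S_pos window_sum_nonneg[OF nonneg] by simp
  show "Fmap d z (-i) = Fmap d z i" for i
    unfolding F by (simp add: window_sum_symmetric[of z, OF sym])
  have "convex_support (window_sum z)"
    using nonneg symdist_convex_support[OF assms(1)] by (rule convex_support_window_sum)
  then show "convex_support (Fmap d z)"
    unfolding F convex_support_def using S_pos assms(2) by auto
qed

lemma divide_le_divide_cross:
  fixes a b c d :: "'a :: linordered_field"
  assumes "0 < b" "0 < d" "a * d \<le> c * b"
  shows "a / b \<le> c / d"
  using assms by (simp add: divide_simps)

definition head_ratio :: "real \<Rightarrow> real \<Rightarrow> real" where
  "head_ratio x y = (1 + x + x * y) / (1 + 2 * x)"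

definition tail_ratio :: "real \<Rightarrow> real \<Rightarrow> real \<Rightarrow> real" where
  "tail_ratio p q r = p * (1 + q + q * r) / (1 + p + p * q)"

lemma head_ratio_nonneg: "0 \<le> x \<Longrightarrow> 0 \<le> y \<Longrightarrow> 0 \<le> head_ratio x y"
  unfolding head_ratio_def by simp

lemma head_ratio_le_one:
  assumes "0 \<le> x" "y \<le> 1"
  shows "head_ratio x y \<le> 1"
proof -
  have "x * y \<le> x"
    using assms by (simp add: mult_left_le)
  then show ?thesis
    unfolding head_ratio_def using assms by simp
qed

lemma head_ratio_mono:
  assumes "0 \<le> x" "y \<le> y'"
  shows "head_ratio x y \<le> head_ratio x y'"
  unfolding head_ratio_def using assms by (simp add: divide_right_mono mult_left_mono)

lemma head_ratio_antimono:
  assumes "0 \<le> x" "x \<le> x'" "y \<le> 1"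
  shows "head_ratio x' y \<le> head_ratio x y"
  unfolding head_ratio_def
proof (rule divide_le_divide_cross)
  have "(1 + x + x * y) * (1 + 2 * x') - (1 + x' + x' * y) * (1 + 2 * x) = (x' - x) * (1 - y)"
    by (simp add: algebra_simps)
  moreover have "0 \<le> (x' - x) * (1 - y)"
    using assms by simp
  ultimately show "(1 + x' + x' * y) * (1 + 2 * x) \<le> (1 + x + x * y) * (1 + 2 * x')"
    by linarith
qed (use assms in auto)

lemma tail_ratio_nonneg: "0 \<le> p \<Longrightarrow> 0 \<le> q \<Longrightarrow> 0 \<le> r \<Longrightarrow> 0 \<le> tail_ratio p q r"
  unfolding tail_ratio_def by simp

lemma tail_ratio_mono:
  assumes "0 \<le> p" "p \<le> p'" "0 \<le> q" "q \<le> q'" "0 \<le> r" "r \<le> r'"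
  shows "tail_ratio p q r \<le> tail_ratio p' q' r'"
proof -
  have "tail_ratio p q r \<le> tail_ratio p q r'"
    unfolding tail_ratio_def using assms by (simp add: divide_right_mono mult_left_mono)
  also have "\<dots> \<le> tail_ratio p q' r'"
    unfolding tail_ratio_def
  proof (rule divide_le_divide_cross)
    have "(1 + q' + q' * r') * (1 + p + p * q) - (1 + q + q * r') * (1 + p + p * q')
          = (q' - q) * (1 + r' + r' * p)"
      by (simp add: algebra_simps)
    moreover have "0 \<le> (q' - q) * (1 + r' + r' * p)"
      using assms by simp
    ultimately have "(1 + q + q * r') * (1 + p + p * q') \<le> (1 + q' + q' * r') * (1 + p + p * q)"
      by linarith
    then show "p * (1 + q + q * r') * (1 + p + p * q') \<le> p * (1 + q' + q' * r') * (1 + p + p * q)"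
      using assms(1) by (simp add: mult.assoc mult_left_mono)
  qed (use assms in \<open>simp_all add: add_pos_nonneg\<close>)
  also have "\<dots> \<le> tail_ratio p' q' r'"
    unfolding tail_ratio_def
  proof (rule divide_le_divide_cross)
    have "p * (1 + p' + p' * q') \<le> p' * (1 + p + p * q')"
      using assms by (simp add: algebra_simps)
    then have "p * (1 + p' + p' * q') * (1 + q' + q' * r') \<le> p' * (1 + p + p * q') * (1 + q' + q' * r')"
      by (rule mult_right_mono) (use assms in simp)
    then show "p * (1 + q' + q' * r') * (1 + p' + p' * q') \<le> p' * (1 + q' + q' * r') * (1 + p + p * q')"
      by (simp add: ac_simps)
  qed (use assms in \<open>simp_all add: add_pos_nonneg\<close>)
  finally show ?thesis .
qed

lemma tail_ratio_le_head_ratio: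
  assumes "0 \<le> b" "b \<le> 1" "0 \<le> c" "c \<le> 1"
  shows "tail_ratio b c c \<le> head_ratio b c"
  unfolding tail_ratio_def head_ratio_def
proof (rule divide_le_divide_cross)
  have "(1 + b + b * c) * (1 + b + b * c) - b * (1 + c + c * c) * (1 + 2 * b)
        = (1 - b * b) + b * ((1 - c) * (1 + c) + c * (1 - c) + c * c * (1 - b))"
    by (simp add: algebra_simps)
  moreover have "0 \<le> (1 - b * b) + b * ((1 - c) * (1 + c) + c * (1 - c) + c * c * (1 - b))"
    using assms mult_le_one[of b b] by (intro add_nonneg_nonneg mult_nonneg_nonneg) auto
  ultimately show "b * (1 + c + c * c) * (1 + 2 * b) \<le> (1 + b + b * c) * (1 + b + b * c)"
    by linarith
qed (use assms in \<open>simp_all add: add_pos_nonneg\<close>)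

lemma Rmap_Fmap:
  assumes "z \<in> symdist" "d \<ge> 1"
  shows "Rmap (Fmap d z) n = Rmap (window_sum z) n ^ d"
proof -
  have "Fmap d z = (\<lambda>i. window_sum z i ^ d / infsum (Amap d z) UNIV)"
    unfolding Fmap_def Amap_eq_window_sum_power ..
  moreover have "infsum (Amap d z) UNIV \<noteq> 0"
    using Amap_infsum_pos[OF assms] by simp
  ultimately show ?thesis
    using assms(2) by (simp add: Rmap_divide_const Rmap_power)
qed

lemma Rmap_window_sum_1:
  assumes "z \<in> symdist"
  shows "Rmap (window_sum z) 1 = head_ratio (Rmap z 1) (Rmap z 2)"
proof -
  define x where "x = Rmap z"
  have z1: "z 1 = z 0 * x 1" and z2: "z 2 = z 0 * x 1 * x 2"
    using symdist_Suc_eq_mult_Rmap[OF assms, of 0] symdist_Suc_eq_mult_Rmap[OF assms, of 1]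
    by (simp_all add: x_def numeral_2_eq_2)
  have "z (-1) = z 1"
    using symdist_symmetric[OF assms, of 1] by simp
  then have w0: "window_sum z 0 = z 0 * (1 + 2 * x 1)"
    unfolding window_sum_def using z1 by (simp add: algebra_simps)
  have w1: "window_sum z 1 = z 0 * (1 + x 1 + x 1 * x 2)"
    unfolding window_sum_def using z1 z2 by (simp add: algebra_simps)
  have "z 0 > 0" "0 \<le> x 1"
    using assms by (simp_all add: symdist_center_pos Rmap_nonneg x_def)
  then show ?thesis
    using Rmap_Suc[of "window_sum z" 0] w0 w1 by (simp add: head_ratio_def x_def)
qed

lemma Rmap_window_sum_tail:
  assumes "z \<in> symdist" "2 \<le> n"
  shows "Rmap (window_sum z) n = tail_ratio (Rmap z (n - 1)) (Rmap z n) (Rmap z (n + 1))"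
proof -
  define x where "x = Rmap z"
  obtain m where n: "n = Suc (Suc m)"
    using assms(2) by (metis add_2_eq_Suc le_Suc_ex)
  define w p q r where "w = z (int m)" and "p = x (Suc m)" and "q = x (Suc (Suc m))"
    and "r = x (Suc (Suc (Suc m)))"
  have z1: "z (int m + 1) = w * p"
    using symdist_Suc_eq_mult_Rmap[OF assms(1), of m] by (simp add: w_def p_def x_def)
  have z2: "z (int m + 2) = w * p * q"
    using symdist_Suc_eq_mult_Rmap[OF assms(1), of "m + 1"] z1 by (simp add: q_def x_def add.commute)
  have z3: "z (int m + 3) = w * p * q * r"
    using symdist_Suc_eq_mult_Rmap[OF assms(1), of "m + 2"] z2 by (simp add: r_def x_def add.commute)
  have w1: "window_sum z (int m + 1) = w * (1 + p + p * q)"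
    unfolding window_sum_def using z1 z2 by (simp add: w_def algebra_simps)
  have w2: "window_sum z (int m + 2) = w * p * (1 + q + q * r)"
    unfolding window_sum_def using z1 z2 z3 by (simp add: algebra_simps)
  have pqr: "0 \<le> p" "0 \<le> q" "0 \<le> r"
    using assms(1) by (simp_all add: p_def q_def r_def x_def Rmap_nonneg)
  have lhs: "Rmap (window_sum z) n
      = (if w * (1 + p + p * q) \<noteq> 0 then w * p * (1 + q + q * r) / (w * (1 + p + p * q)) else 0)"
    using Rmap_Suc[of "window_sum z" "Suc m"] w1 w2 by (simp add: n add.commute)
  have rhs: "tail_ratio (x (n - 1)) (x n) (x (n + 1)) = tail_ratio p q r"
    by (simp add: n p_def q_def r_def)
  show ?thesis
  proof (cases "w = 0")
    case True
    \<comment> \<open>beyond the support of \<open>z\<close> both sides vanish\<close>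
    then have "p = 0"
      by (simp add: p_def x_def w_def Rmap_Suc)
    then show ?thesis
      using lhs rhs True by (simp add: x_def tail_ratio_def)
  next
    case False
    moreover have "0 < 1 + p + p * q"
      using pqr by (simp add: add_pos_nonneg)
    ultimately show ?thesis
      using lhs rhs by (simp add: x_def tail_ratio_def)
  qed
qed

lemma Rset_nonneg: "x \<in> Rset \<Longrightarrow> 0 \<le> x n"
  unfolding Rset_def using Rmap_nonneg by blast

lemma psi_symdistE:
  assumes "x \<in> Rset"
  obtains z where "z \<in> symdist" "Rmap z = x" "psi d x = Rmap (Fmap d z)"
proof
  show "inv_into symdist Rmap x \<in> symdist" "Rmap (inv_into symdist Rmap x) = x"
    using assms unfolding Rset_def by (simp_all add: inv_into_into f_inv_into_f)
qed (simp add: psi_def)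

lemma psi_Rset: "x \<in> Rset \<Longrightarrow> d \<ge> 1 \<Longrightarrow> psi d x \<in> Rset"
  by (metis psi_symdistE Fmap_symdist Rset_def imageI)

lemma psi_1: "x \<in> Rset \<Longrightarrow> d \<ge> 1 \<Longrightarrow> psi d x 1 = head_ratio (x 1) (x 2) ^ d"
  by (metis psi_symdistE Rmap_Fmap Rmap_window_sum_1)

lemma psi_tail:
  "x \<in> Rset \<Longrightarrow> d \<ge> 1 \<Longrightarrow> 2 \<le> n \<Longrightarrow> psi d x n = tail_ratio (x (n - 1)) (x n) (x (n + 1)) ^ d"
  by (metis psi_symdistE Rmap_Fmap Rmap_window_sum_tail)

lemma phi_eq: "phi d a b c = (head_ratio b 0 ^ d, head_ratio a c ^ d, tail_ratio b c c ^ d)"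
  unfolding phi_def head_ratio_def tail_ratio_def
  by (simp add: power2_eq_square flip: power_mult_distrib)

lemma phi_Iset:
  assumes "(a, b, c) \<in> Iset"
  shows "phi d a b c \<in> Iset"
proof -
  have abc: "0 \<le> a" "a \<le> b" "b \<le> 1" "0 \<le> c" "c \<le> b"
    using assms unfolding Iset_def by auto
  have "head_ratio b 0 \<le> head_ratio a c"
    using abc head_ratio_antimono[of a b 0] head_ratio_mono[of a 0 c] by simp
  moreover have "tail_ratio b c c \<le> head_ratio a c"
    using abc tail_ratio_le_head_ratio[of b c] head_ratio_antimono[of a b c] by simp
  moreover have "head_ratio a c \<le> 1"
    using abc by (simp add: head_ratio_le_one)
  moreover have "0 \<le> head_ratio b 0" "0 \<le> tail_ratio b c c"
    using abc by (simp_all add: head_ratio_nonneg tail_ratio_nonneg)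
  ultimately show ?thesis
    unfolding phi_eq Iset_def by (auto intro: power_mono power_le_one)
qed

lemma psi_Sset:
  assumes "d \<ge> 1" "(a, b, c) \<in> Iset" "x \<in> Sset a b c"
  shows "psi d x \<in> Sset (head_ratio b 0 ^ d) (head_ratio a c ^ d) (tail_ratio b c c ^ d)"
proof -
  have abc: "0 \<le> a" "0 \<le> b" "b \<le> 1" "c \<le> b" "c \<le> 1"
    using assms(2) unfolding Iset_def by auto
  have x: "x \<in> Rset" "a \<le> x 1" "x 1 \<le> b" "\<And>n. 2 \<le> n \<Longrightarrow> x n \<le> c"
    using assms(3) unfolding Sset_def by auto
  have x_nonneg: "0 \<le> x n" for n
    using x(1) by (rule Rset_nonneg)
  have psi1: "psi d x 1 = head_ratio (x 1) (x 2) ^ d"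
    using x(1) assms(1) by (rule psi_1)
  have "head_ratio b 0 \<le> head_ratio (x 1) (x 2)"
    using x x_nonneg abc head_ratio_antimono[of "x 1" b 0] head_ratio_mono[of "x 1" 0 "x 2"] by simp
  then have "head_ratio b 0 ^ d \<le> psi d x 1"
    unfolding psi1 using head_ratio_nonneg[of b 0] abc by (intro power_mono) simp_all
  moreover have "head_ratio (x 1) (x 2) \<le> head_ratio a c"
    using x x_nonneg abc head_ratio_antimono[of a "x 1" c] head_ratio_mono[of "x 1" "x 2" c] by simp
  then have "psi d x 1 \<le> head_ratio a c ^ d"
    unfolding psi1 using head_ratio_nonneg[of "x 1" "x 2"] x_nonneg by (intro power_mono) simp_all
  moreover have "0 \<le> psi d x n \<and> psi d x n \<le> tail_ratio b c c ^ d" if "2 \<le> n" for n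
  proof -
    have "x (n - 1) \<le> b"
    proof (cases "n = 2")
      case False
      then have "x (n - 1) \<le> c"
        using that by (intro x(4)) simp
      then show ?thesis
        using abc by simp
    qed (use x in simp)
    then have "tail_ratio (x (n - 1)) (x n) (x (n + 1)) \<le> tail_ratio b c c"
      using x x_nonneg that by (intro tail_ratio_mono) auto
    then show ?thesis
      using psi_tail[OF x(1) assms(1) that] x_nonneg
      by (simp add: power_mono tail_ratio_nonneg)
  qed
  ultimately show ?thesis
    unfolding Sset_def using psi_Rset[OF x(1) assms(1)] by auto
qed

theorem lemma2p2:
  fixes d :: nat and a b c :: real
  assumes "d \<ge> 2" and "(a, b, c) \<in> Iset"
  shows "case phi d a b c of (a', b', c') \<Rightarrow>
           (a', b', c') \<in> Iset \<and> psi d ` Sset a b c \<subseteq> Sset a' b' c'"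
  using phi_Iset[OF assms(2), of d] psi_Sset[of d a b c] assms by (auto simp: phi_eq)

end
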